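(* Let $j\in\mathbb Z$, let $\sigma$ be a $2$-cell of $X_j$ with vertical $1$-cells $e_1,e_2$. If $\bar\sigma_1,\dots,\bar\sigma_\ell$ are $2$-cells of $X_{j+1}$ contained in $\pi_j(\sigma)$ forming a chain (consecutive ones intersect) that joins $\pi_j(e_1)$ to $\pi_j(e_2)$ (i.e. $\bar\sigma_1\cap\pi_j(e_1)\ne\emptyset$ and $\bar\sigma_\ell\cap\pi_j(e_2)\ne\emptyset$), then $\ell\ge m$.
   Context: Standing construction ($n=2$). Fix an integer $L\ge100$, $m=4$, $m_v=3L$. For $j\in\mathbb Z$, $Y_j$ is the cell complex on $\mathbb R^2$ given by the tiling by rectangles $[am^{-j},(a+1)m^{-j}]\times[bm_v^{-j},(b+1)m_v^{-j}]$, $a,b\in\mathbb Z$; a $1$-cell is vertical if it is a translate of $\{0\}\times[0,m_v^{-j}]$. Let $\Phi(x,y)=(m^{-1}x,m_v^{-1}y)$. For $k,\ell\in\mathbb Z$, $i\in\{1,2,3\}$, $a_{k,\ell,i}=\{k+\tfrac i4\}\times[(3\ell+i-1)m_v^{-1},(3\ell+i)m_v^{-1}]$. $\mathcal R$ is the equivalence relation on $\mathbb R^2$ generated by $p\sim p+(0,m_v^{-1})$ for $p\in a_{k,\ell,i}$. $\Phi^j_*\mathcal R=\{(\Phi^jp,\Phi^jq):(p,q)\in\mathcal R\}$; $\mathcal R_j$ is generated by $\Phi^i_*\mathcal R$, $i<j$. $X_j=\mathbb R^2/\mathcal R_j$, $\hat\pi^j$ the quotient map, $\pi_j:X_j\to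 X_{j+1}$ the induced map; $X_j$ has the CW structure whose open cells are images of open cells of $Y_j$, with vertical cells being images of vertical cells. *)

theory Defs
  imports Complex_Main
begin

definition mh :: real where "mh = 4"

definition mv :: "int \<Rightarrow> real" where "mv L = 3 * real_of_int L"

definition gen_equiv :: "('a \<times> 'a) set \<Rightarrow> ('a \<times> 'a) set" where
  "gen_equiv S = (S \<union> S\<inverse>)\<^sup>*"

definition aseg :: "int \<Rightarrow> int \<Rightarrow> int \<Rightarrow> int \<Rightarrow> (real \<times> real) set" where
  "aseg L k l i = {(x, y). x = real_of_int k + real_of_int i / mh \<and>
      (3 * real_of_int l + real_of_int i - 1) / mv L \<le> y \<and> y \<le> (3 * real_of_int l + real_of_int i) / mv L}"

definition Rbase :: "int \<Rightarrow> ((real \<times> real) \<times> (real \<times> real)) set" where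
  "Rbase L = gen_equiv {(p, (fst p, snd p + 1 / mv L)) | p. \<exists>k l i. i \<in> {1, 2, 3} \<and> p \<in> aseg L k l i}"

text \<open>Phi(x,y) = (x/m, y/m_v), and its integer powers Phi^i(x,y) = (m^(-i) x, m_v^(-i) y).\<close>
definition PhiPow :: "int \<Rightarrow> int \<Rightarrow> real \<times> real \<Rightarrow> real \<times> real" where
  "PhiPow L i p = (mh powi (- i) * fst p, mv L powi (- i) * snd p)"

definition push :: "int \<Rightarrow> int \<Rightarrow> ((real \<times> real) \<times> (real \<times> real)) set \<Rightarrow> ((real \<times> real) \<times> (real \<times> real)) set" where
  "push L i S = {(PhiPow L i p, PhiPow L i q) | p q. (p, q) \<in> S}"

definition Rj :: "int \<Rightarrow> int \<Rightarrow> ((real \<times> real) \<times> (real \<times> real)) set" where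
  "Rj L j = gen_equiv (\<Union>i\<in>{i. i < j}. push L i (Rbase L))"

definition Xsp :: "int \<Rightarrow> int \<Rightarrow> (real \<times> real) set set" where
  "Xsp L j = UNIV // Rj L j"

definition qmap :: "int \<Rightarrow> int \<Rightarrow> real \<times> real \<Rightarrow> (real \<times> real) set" where
  "qmap L j p = Rj L j `` {p}"

definition piMap :: "int \<Rightarrow> int \<Rightarrow> (real \<times> real) set \<Rightarrow> (real \<times> real) set" where
  "piMap L j c = qmap L (j + 1) (SOME p. p \<in> c)"

definition rectY :: "int \<Rightarrow> int \<Rightarrow> int \<Rightarrow> int \<Rightarrow> (real \<times> real) set" where
  "rectY L j a b = {real_of_int a * mh powi (- j) .. real_of_int (a + 1) * mh powi (- j)} \<times>
                   {real_of_int b * mv L powi (- j) .. real_of_int (b + 1) * mv L powi (- j)}"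

definition vedgeY :: "int \<Rightarrow> int \<Rightarrow> int \<Rightarrow> int \<Rightarrow> (real \<times> real) set" where
  "vedgeY L j a b = {real_of_int a * mh powi (- j)} \<times>
                   {real_of_int b * mv L powi (- j) .. real_of_int (b + 1) * mv L powi (- j)}"

definition cell2X :: "int \<Rightarrow> int \<Rightarrow> int \<Rightarrow> int \<Rightarrow> (real \<times> real) set set" where
  "cell2X L j a b = qmap L j ` rectY L j a b"

definition vcellX :: "int \<Rightarrow> int \<Rightarrow> int \<Rightarrow> int \<Rightarrow> (real \<times> real) set set" where
  "vcellX L j a b = qmap L j ` vedgeY L j a b"

end

theory Submission
  imports Defs
begin

text \<open>All identifications defining the spaces X_j are vertical, so the abscissa of a point is
well defined on X_j, and the 2-cells of X_{j+1} occupy columns of width m^{-(j+1)}. Two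
intersecting 2-cells lie in equal or adjacent columns, while the two vertical edges of a
2-cell of X_j sit on abscissae m^{-j} = 4 m^{-(j+1)} apart. A chain joining them must therefore
cross at least three column boundaries, so it consists of at least m = 4 cells.\<close>

lemma gen_equiv_invariant:
  assumes "\<And>p q. (p, q) \<in> S \<Longrightarrow> f p = f q" and "(p, q) \<in> gen_equiv S"
  shows "f p = f q"
  using assms(2) unfolding gen_equiv_def
proof (induction rule: rtrancl_induct)
  case (step y z)
  then show ?case using assms(1) by fastforce
qed simp

lemma Rbase_fst_eq: "(p, q) \<in> Rbase L \<Longrightarrow> fst p = fst q"
  unfolding Rbase_def by (rule gen_equiv_invariant[where f = fst]) auto

lemma Rj_fst_eq: "(p, q) \<in> Rj L j \<Longrightarrow> fst p = fst q"
  unfolding Rj_def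
proof (rule gen_equiv_invariant[where f = fst])
  fix p q assume "(p, q) \<in> (\<Union>i\<in>{i. i < j}. push L i (Rbase L))"
  then obtain i p0 q0 where "p = PhiPow L i p0" "q = PhiPow L i q0" "(p0, q0) \<in> Rbase L"
    unfolding push_def by blast
  then show "fst p = fst q" using Rbase_fst_eq unfolding PhiPow_def by auto
qed

lemma qmap_fst_eq: "q \<in> qmap L j p \<Longrightarrow> fst q = fst p"
  unfolding qmap_def using Rj_fst_eq by fastforce

lemma qmap_self: "p \<in> qmap L j p"
  unfolding qmap_def Rj_def gen_equiv_def by simp

lemma piMap_qmap_fst_eq:
  assumes "x \<in> piMap L j (qmap L j p)"
  shows "fst x = fst p"
proof -
  define q where "q = (SOME q. q \<in> qmap L j p)"
  have "q \<in> qmap L j p" unfolding q_def by (rule someI[of "\<lambda>q. q \<in> qmap L j p", OF qmap_self])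
  moreover have "x \<in> qmap L (j + 1) q" using assms unfolding piMap_def q_def by simp
  ultimately show ?thesis using qmap_fst_eq[of q L j p] qmap_fst_eq[of x L "j + 1" q] by simp
qed

lemma mh_powi_pos: "mh powi k > 0"
  unfolding mh_def by simp

lemma mh_powi_minus_eq: "mh powi (- j) = 4 * mh powi (- (j + 1))"
proof -
  have "mh powi (- j) = mh powi (- (j + 1)) * mh powi 1"
    by (subst power_int_add [symmetric]) (simp_all add: mh_def)
  then show ?thesis by (simp add: mh_def)
qed

lemma fst_in_cell2X:
  assumes "c \<in> cell2X L j A B" and "p \<in> c"
  shows "real_of_int A * mh powi (- j) \<le> fst p \<and> fst p \<le> real_of_int (A + 1) * mh powi (- j)"
proof -
  obtain r where "r \<in> rectY L j A B" "c = qmap L j r"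
    using assms(1) unfolding cell2X_def by blast
  moreover from this have "fst p = fst r" using assms(2) qmap_fst_eq by blast
  ultimately show ?thesis unfolding rectY_def by auto
qed

lemma fst_in_piMap_vcellX:
  assumes "c \<in> piMap L j ` vcellX L j a b" and "p \<in> c"
  shows "fst p = real_of_int (4 * a) * mh powi (- (j + 1))"
proof -
  obtain q where q: "q \<in> vedgeY L j a b" "c = piMap L j (qmap L j q)"
    using assms(1) unfolding vcellX_def by blast
  then have "fst p = fst q" using assms(2) piMap_qmap_fst_eq by blast
  also have "fst q = real_of_int a * mh powi (- j)"
    using q(1) unfolding vedgeY_def by auto
  finally show ?thesis by (simp add: mh_powi_minus_eq[of j])
qed

lemma cell2X_nonempty: "c \<in> cell2X L j A B \<Longrightarrow> \<exists>p. p \<in> c"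
  unfolding cell2X_def using qmap_self by blast

lemma column_of_cell2X_meeting_edge:
  assumes "c \<in> cell2X L (j + 1) A B" and "c \<in> piMap L j ` vcellX L j a b"
  shows "4 * a - 1 \<le> A \<and> A \<le> 4 * a"
proof -
  obtain p where p: "p \<in> c" using cell2X_nonempty[OF assms(1)] by blast
  have "real_of_int A * mh powi (- (j + 1)) \<le> real_of_int (4 * a) * mh powi (- (j + 1)) \<and>
        real_of_int (4 * a) * mh powi (- (j + 1)) \<le> real_of_int (A + 1) * mh powi (- (j + 1))"
    using fst_in_cell2X[OF assms(1) p] fst_in_piMap_vcellX[OF assms(2) p] by simp
  then have "A \<le> 4 * a \<and> 4 * a \<le> A + 1"
    unfolding mult_le_cancel_right_pos[OF mh_powi_pos] of_int_le_iff .
  then show ?thesis by simp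
qed

lemma columns_of_meeting_cell2X:
  assumes "c \<in> cell2X L j A B" and "c \<in> cell2X L j A' B'"
  shows "\<bar>A - A'\<bar> \<le> 1"
proof -
  obtain p where p: "p \<in> c" using cell2X_nonempty[OF assms(1)] by blast
  have "real_of_int A * mh powi (- j) \<le> real_of_int (A' + 1) * mh powi (- j) \<and>
        real_of_int A' * mh powi (- j) \<le> real_of_int (A + 1) * mh powi (- j)"
    using fst_in_cell2X[OF assms(1) p] fst_in_cell2X[OF assms(2) p] by linarith
  then have "A \<le> A' + 1 \<and> A' \<le> A + 1"
    unfolding mult_le_cancel_right_pos[OF mh_powi_pos] of_int_le_iff .
  then show ?thesis by linarith
qed

lemma unit_steps_displacement_le:
  fixes A :: "nat \<Rightarrow> int"
  assumes "\<And>k. Suc k < n \<Longrightarrow> \<bar>A k - A (Suc k)\<bar> \<le> 1" and "k < n"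
  shows "\<bar>A 0 - A k\<bar> \<le> int k"
  using assms(2)
proof (induction k)
  case (Suc k)
  then show ?case using assms(1)[of k] by simp
qed simp

theorem mainTheorem7:
  fixes L j a b :: int and \<sigma> e1 e2 :: "(real \<times> real) set set"
    and n :: nat and sb :: "nat \<Rightarrow> (real \<times> real) set set"
  assumes "L \<ge> 100"
    and "\<sigma> = cell2X L j a b"
    and "(e1 = vcellX L j a b \<and> e2 = vcellX L j (a + 1) b) \<or>
         (e1 = vcellX L j (a + 1) b \<and> e2 = vcellX L j a b)"
    and "n \<ge> 1"
    and "\<forall>k<n. \<exists>a' b'. sb k = cell2X L (j + 1) a' b'"
    and "\<forall>k<n. sb k \<subseteq> piMap L j ` \<sigma>"
    and "\<forall>k. k + 1 < n \<longrightarrow> sb k \<inter> sb (k + 1) \<noteq> {}"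
    and "sb 0 \<inter> piMap L j ` e1 \<noteq> {}"
    and "sb (n - 1) \<inter> piMap L j ` e2 \<noteq> {}"
  shows "real n \<ge> mh"
proof -
  obtain A B where AB: "\<And>k. k < n \<Longrightarrow> sb k = cell2X L (j + 1) (A k) (B k)"
    using assms(5) by metis
  have "\<bar>A k - A (Suc k)\<bar> \<le> 1" if "Suc k < n" for k
  proof -
    have "sb k \<inter> sb (Suc k) \<noteq> {}" using assms(7) that by simp
    then obtain c where "c \<in> sb k" "c \<in> sb (Suc k)" by blast
    with that show ?thesis
      using columns_of_meeting_cell2X[of c L "j + 1" "A k" "B k" "A (Suc k)" "B (Suc k)"] AB by simp
  qed
  then have "\<bar>A 0 - A (n - 1)\<bar> \<le> int (n - 1)"
    using unit_steps_displacement_le[of n A "n - 1"] assms(4) by simp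
  moreover obtain a1 a2 where a12: "e1 = vcellX L j a1 b" "e2 = vcellX L j a2 b" "\<bar>a1 - a2\<bar> = 1"
    using assms(3) that[of a "a + 1"] that[of "a + 1" a] by auto
  obtain c0 where c0: "c0 \<in> sb 0" "c0 \<in> piMap L j ` vcellX L j a1 b"
    using assms(8) a12(1) by blast
  obtain c1 where c1: "c1 \<in> sb (n - 1)" "c1 \<in> piMap L j ` vcellX L j a2 b"
    using assms(9) a12(2) by blast
  have "4 * a1 - 1 \<le> A 0 \<and> A 0 \<le> 4 * a1"
    using column_of_cell2X_meeting_edge[OF _ c0(2)] c0(1) AB[of 0] assms(4) by simp
  moreover have "4 * a2 - 1 \<le> A (n - 1) \<and> A (n - 1) \<le> 4 * a2"
    using column_of_cell2X_meeting_edge[OF _ c1(2)] c1(1) AB[of "n - 1"] assms(4) by simp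
  ultimately have "int n \<ge> 4" using a12(3) assms(4) by linarith
  then show ?thesis unfolding mh_def by simp
qed

end
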